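(* Let $d\ge1$, $\sigma>0$, and let $A_0,A_1\in\mathbb{R}^{d\times d}$ be constant matrices. Let $G:[0,\infty)\to\mathbb{R}^{d\times d}$ be continuous with $A_1G(\vartheta)=G(\vartheta)A_1$ for all $\vartheta\ge0$, and let $G^*(\vartheta)=G(0)$ for $\vartheta\in[-\sigma,0)$, $G^*(\vartheta)=G(\vartheta)$ for $\vartheta\ge0$. Let $Z$ be the function defined in the context. Then \[ X(\vartheta)=\int_0^{\vartheta}Z(\vartheta-\sigma-s)\,G^*(s)\,ds,\qquad\vartheta\in[-\sigma,\infty), \] satisfies \[ \dot X(\vartheta)=A_0X(\vartheta-\sigma)+X(\vartheta-\sigma)A_1+G(\vartheta),\ \ \vartheta\ge0,\qquad X(\vartheta)=\Theta,\ \ \vartheta\in[-\sigma,0]. \]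
   Context: $\Theta$ and $I$ denote the $d\times d$ zero and identity matrices. Define matrices $Q_{r+1}(r\sigma)$, $r=0,1,2,\dots$, recursively by $Q_1(0)=I$ and $Q_{r+1}(r\sigma)=A_0Q_r((r-1)\sigma)+Q_r((r-1)\sigma)A_1$ for $r\ge 1$. Define $Z:\mathbb{R}\to\mathbb{R}^{d\times d}$ by $Z(\vartheta)=\Theta$ for $\vartheta<-\sigma$, and, for each integer $u\ge 0$ and $\vartheta\in[(u-1)\sigma,u\sigma)$, \[ Z(\vartheta)=\sum_{r=0}^{u}Q_{r+1}(r\sigma)\frac{(\vartheta-(r-1)\sigma)^r}{r!}. \] *)

theory Defs
  imports "HOL-Analysis.Analysis"
begin

text \<open>Matrices in R^{d x d} are represented as real^'n^'n for a finite index type 'n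
  (d = CARD('n) >= 1).  Qmat A0 A1 r is the matrix Q_{r+1}(r sigma) of the paper.\<close>

fun Qmat :: "real^'n^'n \<Rightarrow> real^'n^'n \<Rightarrow> nat \<Rightarrow> real^'n^'n" where
  "Qmat A0 A1 0 = mat 1"
| "Qmat A0 A1 (Suc r) = A0 ** Qmat A0 A1 r + Qmat A0 A1 r ** A1"

definition Zfun :: "real^'n^'n \<Rightarrow> real^'n^'n \<Rightarrow> real \<Rightarrow> real \<Rightarrow> real^'n^'n" where
  "Zfun A0 A1 \<sigma> t =
     (if t < - \<sigma> then 0
      else (\<Sum>r = 0..nat (\<lfloor>t / \<sigma>\<rfloor> + 1).
              ((t - (real r - 1) * \<sigma>) ^ r / fact r) *\<^sub>R Qmat A0 A1 r))"

definition Gstar :: "real \<Rightarrow> (real \<Rightarrow> real^'n^'n) \<Rightarrow> real \<Rightarrow> real^'n^'n" where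
  "Gstar \<sigma> G t = (if t < 0 then G 0 else G t)"

text \<open>Oriented integral: int_0^t f = - int_t^0 f for t < 0.\<close>

definition Xsol :: "real^'n^'n \<Rightarrow> real^'n^'n \<Rightarrow> real \<Rightarrow> (real \<Rightarrow> real^'n^'n) \<Rightarrow> real \<Rightarrow> real^'n^'n" where
  "Xsol A0 A1 \<sigma> G t =
     (if 0 \<le> t then integral {0..t} (\<lambda>s. Zfun A0 A1 \<sigma> (t - \<sigma> - s) ** Gstar \<sigma> G s)
      else - integral {t..0} (\<lambda>s. Zfun A0 A1 \<sigma> (t - \<sigma> - s) ** Gstar \<sigma> G s))"

end

theory Submission
  imports Defs
begin

(* Expanding Z, the kernel Z(t - sigma - s) is a finite sum of truncated powers
   Q_{r+1}(r sigma) (t - r sigma - s)_+^r / r!.  Hence on [-sigma, N sigma] the function X equals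
   the sum over r <= N of Q_{r+1}(r sigma) F_r(t - r sigma), where
   F_r(x) = int_0^x (x-s)^r/r! G(s) ds (iterated_primitive G r x) is the (r+1)-fold primitive of G
   vanishing on (-oo, 0].  Since F_0' = G and F_{r+1}' = F_r,
   differentiation lowers every index by one, and the recursion
   Q_{r+2} = A0 Q_{r+1} + Q_{r+1} A1, together with A1 F_r = F_r A1 (inherited from A1 G = G A1),
   turns the lowered sum into A0 X(t - sigma) + X(t - sigma) A1. *)

lemma matrix_add_rdistrib: "(B + C) ** A = B ** A + C ** A"
  by (vector matrix_matrix_mult_def sum.distrib[symmetric] field_simps)

lemma bounded_bilinear_matrix_matrix_mult:
  "bounded_bilinear ((**) :: real^'n^'m \<Rightarrow> real^'p^'n \<Rightarrow> real^'p^'m)"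
proof -
  have "bilinear ((**) :: real^'n^'m \<Rightarrow> real^'p^'n \<Rightarrow> real^'p^'m)"
    unfolding bilinear_def
    by (auto intro!: linearI simp: matrix_add_ldistrib matrix_add_rdistrib
        matrix_scalar_ac scalar_matrix_assoc)
  then show ?thesis
    by (simp add: bilinear_conv_bounded_bilinear)
qed

lemma has_vector_derivative_shift:
  assumes "(f has_vector_derivative D) (at (x - c))"
  shows "((\<lambda>y. f (y - c)) has_vector_derivative D) (at x)"
proof -
  have "((\<lambda>y. y - c) has_vector_derivative 1) (at x)"
    by (auto intro!: derivative_eq_intros)
  from vector_diff_chain_at[OF this assms] show ?thesis
    by (simp add: o_def)
qed

lemma integral_has_vector_derivative_atLeast:
  fixes f :: "real \<Rightarrow> 'a::banach"
  assumes "continuous_on {a..} f" and "a \<le> x"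
  shows "((\<lambda>u. integral {a..u} f) has_vector_derivative f x) (at x within {a..})"
proof -
  have "((\<lambda>u. integral {a..u} f) has_vector_derivative f x) (at x within {a..x+1})"
    using assms by (intro integral_has_vector_derivative continuous_on_subset[OF assms(1)]) auto
  moreover have "at x within {a..x+1} = at x within {a..}"
    by (rule at_within_nhd[where S = "{..<x+1}"]) auto
  ultimately show ?thesis
    by simp
qed

lemma has_vector_derivative_zero_extension:
  fixes f f' :: "real \<Rightarrow> 'a::real_normed_vector"
  assumes f_nonpos: "\<And>y. y \<le> 0 \<Longrightarrow> f y = 0" and f'_nonpos: "\<And>y. y \<le> 0 \<Longrightarrow> f' y = 0"
    and f_nonneg: "0 \<le> x \<Longrightarrow> (f has_vector_derivative f' x) (at x within {0..})"
  shows "(f has_vector_derivative f' x) (at x)"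
proof -
  have closures: "closure {0::real..} \<inter> closure {..<0} = {0}"
    by auto
  have "((\<lambda>y. if y \<in> {0..} then f y else 0) has_vector_derivative
      (if x \<in> {0..} then f' x else 0)) (at x within UNIV)"
    by (rule has_vector_derivative_If_within_closures[where T = "{..<0}"])
      (use f_nonneg f_nonpos f'_nonpos in \<open>auto simp: closures insert_absorb\<close>)
  moreover have "(\<lambda>y. if y \<in> {0..} then f y else 0) = f"
    using f_nonpos by fastforce
  ultimately show ?thesis
    using f'_nonpos[of x] by (auto split: if_splits)
qed

definition trunc_power :: "nat \<Rightarrow> real \<Rightarrow> real" where
  "trunc_power r y = (if 0 \<le> y then y ^ r / fact r else 0)"

lemma continuous_on_trunc_power:
  assumes "0 < r"
  shows "continuous_on UNIV (trunc_power r)"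
proof -
  have "trunc_power r = (\<lambda>y. max y 0 ^ r / fact r)"
    using assms by (auto simp: trunc_power_def max_def fun_eq_iff)
  then show ?thesis
    by (simp add: continuous_intros)
qed

lemma trunc_power_has_vector_derivative:
  assumes "0 < r"
  shows "(trunc_power (Suc r) has_vector_derivative trunc_power r y) (at y)"
proof (rule has_vector_derivative_zero_extension)
  assume "0 \<le> y"
  have "real (Suc r) * y ^ r / fact (Suc r) = y ^ r / fact r"
    by (simp add: fact_Suc del: of_nat_Suc)
  with DERIV_cdivide[OF DERIV_pow[of "Suc r" y], of "fact (Suc r)"]
  have "((\<lambda>y. y ^ Suc r / fact (Suc r)) has_real_derivative y ^ r / fact r) (at y within {0..})"
    using has_field_derivative_at_within by fastforce
  then have "((\<lambda>y. y ^ Suc r / fact (Suc r)) has_vector_derivative y ^ r / fact r) (at y within {0..})"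
    by (simp add: has_real_derivative_iff_has_vector_derivative)
  moreover have "trunc_power r y = y ^ r / fact r"
    using \<open>0 \<le> y\<close> by (simp add: trunc_power_def)
  ultimately show "(trunc_power (Suc r) has_vector_derivative trunc_power r y) (at y within {0..})"
    using has_vector_derivative_transform[of y "{0..}" "trunc_power (Suc r)"]
    by (simp add: \<open>0 \<le> y\<close> trunc_power_def)
qed (use assms in \<open>simp_all add: trunc_power_def\<close>)

(* Cauchy's formula for repeated integration; for x < 0 the interval {0..x} is empty,
   so the primitive vanishes there. *)
definition iterated_primitive :: "(real \<Rightarrow> 'a::real_normed_vector) \<Rightarrow> nat \<Rightarrow> real \<Rightarrow> 'a" where
  "iterated_primitive G r x = integral {0..x} (\<lambda>s. trunc_power r (x - s) *\<^sub>R G s)"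

lemma iterated_primitive_nonpos:
  assumes "x \<le> 0"
  shows "iterated_primitive G r x = 0"
  using assms by (cases "x = 0") (simp_all add: iterated_primitive_def)

lemma iterated_primitive_0: "iterated_primitive G 0 x = integral {0..x} G"
  unfolding iterated_primitive_def by (rule integral_cong) (simp add: trunc_power_def)

lemma integrable_iterated_primitive_kernel:
  fixes G :: "real \<Rightarrow> 'a::banach"
  assumes "continuous_on {0..x} G"
  shows "(\<lambda>s. trunc_power r (x - s) *\<^sub>R G s) integrable_on {0..x}"
proof -
  have "continuous_on {0..x} (\<lambda>s. ((x - s) ^ r / fact r) *\<^sub>R G s)"
    using assms by (intro continuous_intros) auto
  then have "continuous_on {0..x} (\<lambda>s. trunc_power r (x - s) *\<^sub>R G s)"
    by (rule continuous_on_eq) (simp add: trunc_power_def)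
  then show ?thesis
    by (rule integrable_continuous_real)
qed

lemma has_integral_iterated_primitive:
  fixes G :: "real \<Rightarrow> 'a::banach"
  assumes G: "continuous_on {0..b} G" and "x \<le> b"
  shows "((\<lambda>s. trunc_power r (x - s) *\<^sub>R G s) has_integral iterated_primitive G r x) {0..b}"
proof (cases "x < 0")
  case True
  then have "trunc_power r (x - s) *\<^sub>R G s = 0" if "s \<in> {0..b}" for s
    using that by (simp add: trunc_power_def)
  then have "((\<lambda>s. trunc_power r (x - s) *\<^sub>R G s) has_integral 0) {0..b}"
    by (rule has_integral_is_0)
  then show ?thesis
    using True by (simp add: iterated_primitive_nonpos)
next
  case False
  have "((\<lambda>s. trunc_power r (x - s) *\<^sub>R G s) has_integral iterated_primitive G r x) {0..x}"
    unfolding iterated_primitive_def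
    using G \<open>x \<le> b\<close> by (intro integrable_integral integrable_iterated_primitive_kernel
        continuous_on_subset[OF G]) auto
  moreover have "((\<lambda>s. trunc_power r (x - s) *\<^sub>R G s) has_integral 0) {x..b}"
    by (rule has_integral_spike_finite[of "{x}" _ _ "\<lambda>s. 0"]) (auto simp: trunc_power_def)
  ultimately show ?thesis
    using has_integral_combine[of 0 x b] False \<open>x \<le> b\<close> by fastforce
qed

lemma iterated_primitive_eq_integral:
  fixes G :: "real \<Rightarrow> 'a::banach"
  assumes "continuous_on {0..b} G" and "x \<le> b"
  shows "iterated_primitive G r x = integral {0..b} (\<lambda>s. trunc_power r (x - s) *\<^sub>R G s)"
  using has_integral_iterated_primitive[OF assms] by (rule integral_unique[symmetric])

lemma iterated_primitive_0_has_vector_derivative: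
  fixes G :: "real \<Rightarrow> 'a::banach"
  assumes "continuous_on {0..} G" and "0 \<le> x"
  shows "(iterated_primitive G 0 has_vector_derivative G x) (at x within {0..})"
  unfolding iterated_primitive_0 using assms by (rule integral_has_vector_derivative_atLeast)

(* trunc_power 0 jumps at 0, so the Leibniz rule used for r > 0 does not apply to F_1;
   instead F_1 is written through ordinary primitives. *)
lemma iterated_primitive_1:
  fixes G :: "real \<Rightarrow> 'a::banach"
  assumes "continuous_on {0..x} G"
  shows "iterated_primitive G 1 x = x *\<^sub>R integral {0..x} G - integral {0..x} (\<lambda>s. s *\<^sub>R G s)"
proof -
  have "iterated_primitive G 1 x = integral {0..x} (\<lambda>s. x *\<^sub>R G s - s *\<^sub>R G s)"
    unfolding iterated_primitive_def
    by (rule integral_cong) (simp add: trunc_power_def algebra_simps)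
  also have "\<dots> = x *\<^sub>R integral {0..x} G - integral {0..x} (\<lambda>s. s *\<^sub>R G s)"
    using assms by (simp add: integral_diff integrable_continuous_real continuous_intros)
  finally show ?thesis .
qed

lemma iterated_primitive_1_has_vector_derivative:
  fixes G :: "real \<Rightarrow> 'a::banach"
  assumes G: "continuous_on {0..} G"
  shows "(iterated_primitive G 1 has_vector_derivative iterated_primitive G 0 x) (at x)"
proof (rule has_vector_derivative_zero_extension)
  assume "0 \<le> x"
  have "continuous_on {0..} (\<lambda>s. s *\<^sub>R G s)"
    using G by (intro continuous_intros)
  then have "((\<lambda>y. y *\<^sub>R integral {0..y} G - integral {0..y} (\<lambda>s. s *\<^sub>R G s))
      has_vector_derivative (x *\<^sub>R G x + 1 *\<^sub>R integral {0..x} G) - x *\<^sub>R G x) (at x within {0..})"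
    using G \<open>0 \<le> x\<close> by (intro has_vector_derivative_diff has_vector_derivative_scaleR
        DERIV_ident integral_has_vector_derivative_atLeast)
  moreover have "iterated_primitive G 1 y = y *\<^sub>R integral {0..y} G - integral {0..y} (\<lambda>s. s *\<^sub>R G s)"
    if "y \<in> {0..}" for y
    by (intro iterated_primitive_1 continuous_on_subset[OF G]) auto
  ultimately show "(iterated_primitive G 1 has_vector_derivative iterated_primitive G 0 x)
      (at x within {0..})"
    using has_vector_derivative_transform[of x "{0..}" "iterated_primitive G 1"] \<open>0 \<le> x\<close>
    by (simp add: iterated_primitive_0)
qed (simp_all add: iterated_primitive_nonpos)

lemma iterated_primitive_Suc_has_vector_derivative_pos:
  fixes G :: "real \<Rightarrow> 'a::banach"
  assumes G: "continuous_on {0..} G" and "0 < r"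
  shows "(iterated_primitive G (Suc r) has_vector_derivative iterated_primitive G r x) (at x)"
proof -
  define b where "b = max x 0 + 1"
  have "x < b" and "0 \<le> b"
    by (auto simp: b_def)
  have G_b: "continuous_on {0..b} G"
    using G by (rule continuous_on_subset) auto
  have primitive_eq: "iterated_primitive G k y = integral {0..b} (\<lambda>s. trunc_power k (y - s) *\<^sub>R G s)"
    if "y \<in> {..<b}" for k y
    using that by (intro iterated_primitive_eq_integral[OF G_b]) simp
  have at_x: "at x within {..<b} = at x"
    using \<open>x < b\<close> by (intro at_within_open) auto
  have primitive_x: "iterated_primitive G r x = integral {0..b} (\<lambda>s. trunc_power r (x - s) *\<^sub>R G s)"
    using \<open>x < b\<close> by (intro primitive_eq) simp
  have "((\<lambda>y. integral (cbox 0 b) (\<lambda>s. trunc_power (Suc r) (y - s) *\<^sub>R G s)) has_vector_derivative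
      integral (cbox 0 b) (\<lambda>s. trunc_power r (x - s) *\<^sub>R G s)) (at x within {..<b})"
  proof (rule leibniz_rule_vector_derivative)
    fix y s
    have "((\<lambda>y. trunc_power (Suc r) (y - s)) has_vector_derivative trunc_power r (y - s)) (at y)"
      by (rule has_vector_derivative_shift[OF trunc_power_has_vector_derivative[OF \<open>0 < r\<close>]])
    then show "((\<lambda>y. trunc_power (Suc r) (y - s) *\<^sub>R G s) has_vector_derivative
        trunc_power r (y - s) *\<^sub>R G s) (at y within {..<b})"
      by (rule has_vector_derivative_at_within[OF
          bounded_linear.has_vector_derivative[OF bounded_linear_scaleR_left]])
  next
    fix y :: real
    assume "y \<in> {..<b}"
    then show "(\<lambda>s. trunc_power (Suc r) (y - s) *\<^sub>R G s) integrable_on cbox 0 b"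
      using has_integral_iterated_primitive[OF G_b, of y "Suc r"]
      by (auto simp: integrable_on_def cbox_interval)
  next
    have "continuous_on ({..<b} \<times> {0..b}) (\<lambda>p. trunc_power r (fst p - snd p))"
      by (rule continuous_on_compose2[OF continuous_on_trunc_power[OF \<open>0 < r\<close>]])
        (auto intro!: continuous_intros)
    moreover have "continuous_on ({..<b} \<times> {0..b}) (\<lambda>p. G (snd p))"
      by (rule continuous_on_compose2[OF G_b]) (auto intro!: continuous_intros)
    ultimately show "continuous_on ({..<b} \<times> cbox 0 b) (\<lambda>(y, s). trunc_power r (y - s) *\<^sub>R G s)"
      unfolding case_prod_beta cbox_interval by (rule continuous_on_scaleR)
  qed (use \<open>x < b\<close> in auto)
  then have "((\<lambda>y. integral {0..b} (\<lambda>s. trunc_power (Suc r) (y - s) *\<^sub>R G s)) has_vector_derivative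
      iterated_primitive G r x) (at x)"
    unfolding cbox_interval at_x primitive_x .
  then show ?thesis
    by (rule has_vector_derivative_transform_within_open[where S = "{..<b}"])
      (use \<open>x < b\<close> in \<open>simp_all add: primitive_eq\<close>)
qed

lemma iterated_primitive_Suc_has_vector_derivative:
  fixes G :: "real \<Rightarrow> 'a::banach"
  assumes "continuous_on {0..} G"
  shows "(iterated_primitive G (Suc r) has_vector_derivative iterated_primitive G r x) (at x)"
proof (cases "r = 0")
  case True
  then show ?thesis
    using iterated_primitive_1_has_vector_derivative[OF assms] by simp
next
  case False
  then show ?thesis
    using iterated_primitive_Suc_has_vector_derivative_pos[OF assms] by simp
qed

lemma iterated_primitive_commute:
  fixes G :: "real \<Rightarrow> real^'n^'n"
  assumes G: "continuous_on {0..} G" and comm: "\<And>s. 0 \<le> s \<Longrightarrow> A ** G s = G s ** A"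
  shows "A ** iterated_primitive G r x = iterated_primitive G r x ** A"
proof -
  let ?f = "\<lambda>s. trunc_power r (x - s) *\<^sub>R G s"
  have int: "?f integrable_on {0..x}"
    by (intro integrable_iterated_primitive_kernel continuous_on_subset[OF G]) auto
  have "A ** integral {0..x} ?f = integral {0..x} ((**) A \<circ> ?f)"
    by (rule integral_linear[OF int bounded_bilinear.bounded_linear_right[OF
          bounded_bilinear_matrix_matrix_mult], symmetric])
  also have "\<dots> = integral {0..x} ((\<lambda>M. M ** A) \<circ> ?f)"
    by (rule integral_cong) (simp add: comm matrix_scalar_ac scalar_matrix_assoc[symmetric])
  also have "\<dots> = integral {0..x} ?f ** A"
    by (rule integral_linear[OF int bounded_bilinear.bounded_linear_left[OF
          bounded_bilinear_matrix_matrix_mult]])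
  finally show ?thesis
    unfolding iterated_primitive_def .
qed

lemma Zfun_eq_trunc_power_sum:
  assumes "0 < \<sigma>" and "v < real N * \<sigma>"
  shows "Zfun A0 A1 \<sigma> v = (\<Sum>r=0..N. trunc_power r (v - (real r - 1) * \<sigma>) *\<^sub>R Qmat A0 A1 r)"
proof (cases "v < - \<sigma>")
  case True
  have "trunc_power r (v - (real r - 1) * \<sigma>) = 0" for r
  proof -
    have "0 \<le> real r * \<sigma>"
      using assms by simp
    then show ?thesis
      using True by (simp add: trunc_power_def algebra_simps)
  qed
  then show ?thesis
    using True by (simp add: Zfun_def)
next
  case False
  define u where "u = nat (\<lfloor>v / \<sigma>\<rfloor> + 1)"
  have floor_ge: "- 1 \<le> \<lfloor>v / \<sigma>\<rfloor>"
    using False assms by (simp add: le_floor_iff field_simps)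
  have active: "0 \<le> v - (real r - 1) * \<sigma> \<longleftrightarrow> r \<le> u" for r
  proof -
    have "0 \<le> v - (real r - 1) * \<sigma> \<longleftrightarrow> real r - 1 \<le> v / \<sigma>"
      using assms by (simp add: le_divide_eq)
    also have "\<dots> \<longleftrightarrow> int r - 1 \<le> \<lfloor>v / \<sigma>\<rfloor>"
      by (simp add: le_floor_iff)
    also have "\<dots> \<longleftrightarrow> r \<le> u"
      using floor_ge unfolding u_def by linarith
    finally show ?thesis .
  qed
  have "u \<le> N"
    using active[of "Suc N"] assms by (simp add: algebra_simps)
  have "Zfun A0 A1 \<sigma> v = (\<Sum>r=0..u. ((v - (real r - 1) * \<sigma>) ^ r / fact r) *\<^sub>R Qmat A0 A1 r)"
    using False by (simp add: Zfun_def u_def)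
  also have "\<dots> = (\<Sum>r=0..u. trunc_power r (v - (real r - 1) * \<sigma>) *\<^sub>R Qmat A0 A1 r)"
    by (rule sum.cong) (use active in \<open>auto simp: trunc_power_def simp del: diff_ge_0_iff_ge\<close>)
  also have "\<dots> = (\<Sum>r=0..N. trunc_power r (v - (real r - 1) * \<sigma>) *\<^sub>R Qmat A0 A1 r)"
    using \<open>u \<le> N\<close> active
    by (intro sum.mono_neutral_left) (auto simp: trunc_power_def simp del: diff_ge_0_iff_ge)
  finally show ?thesis .
qed

definition partial_solution ::
  "real^'n^'n \<Rightarrow> real^'n^'n \<Rightarrow> real \<Rightarrow> (real \<Rightarrow> real^'n^'n) \<Rightarrow> nat \<Rightarrow> real \<Rightarrow> real^'n^'n" where
  "partial_solution A0 A1 \<sigma> G N t =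
     (\<Sum>r=0..N. Qmat A0 A1 r ** iterated_primitive G r (t - real r * \<sigma>))"

lemma Xsol_eq_partial_solution:
  assumes "0 < \<sigma>" and G: "continuous_on {0..} G" and "- \<sigma> \<le> t" and "t \<le> real N * \<sigma>"
  shows "Xsol A0 A1 \<sigma> G t = partial_solution A0 A1 \<sigma> G N t"
proof (cases "0 \<le> t")
  case True
  let ?Q = "Qmat A0 A1"
  have integrand: "Zfun A0 A1 \<sigma> (t - \<sigma> - s) ** Gstar \<sigma> G s =
      (\<Sum>r=0..N. ?Q r ** (trunc_power r (t - real r * \<sigma> - s) *\<^sub>R G s))" if "s \<in> {0..t}" for s
  proof -
    have "t - \<sigma> - s < real N * \<sigma>"
      using that assms by simp
    moreover have "t - \<sigma> - s - (real r - 1) * \<sigma> = t - real r * \<sigma> - s" for r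
      by (simp add: algebra_simps)
    ultimately have "Zfun A0 A1 \<sigma> (t - \<sigma> - s) =
        (\<Sum>r=0..N. trunc_power r (t - real r * \<sigma> - s) *\<^sub>R ?Q r)"
      by (simp only: Zfun_eq_trunc_power_sum[OF \<open>0 < \<sigma>\<close>])
    then show ?thesis
      using that by (simp add: Gstar_def matrix_scalar_ac scalar_matrix_assoc
          bounded_bilinear.sum_left[OF bounded_bilinear_matrix_matrix_mult])
  qed
  have sum_integral: "((\<lambda>s. \<Sum>r=0..N. ?Q r ** (trunc_power r (t - real r * \<sigma> - s) *\<^sub>R G s))
      has_integral partial_solution A0 A1 \<sigma> G N t) {0..t}"
    unfolding partial_solution_def
  proof (rule has_integral_sum)
    fix r
    have "((\<lambda>s. trunc_power r (t - real r * \<sigma> - s) *\<^sub>R G s) has_integral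
        iterated_primitive G r (t - real r * \<sigma>)) {0..t}"
      using assms by (intro has_integral_iterated_primitive continuous_on_subset[OF G]) auto
    from has_integral_linear[OF this bounded_bilinear.bounded_linear_right[OF
          bounded_bilinear_matrix_matrix_mult, of "?Q r"]]
    show "((\<lambda>s. ?Q r ** (trunc_power r (t - real r * \<sigma> - s) *\<^sub>R G s)) has_integral
        ?Q r ** iterated_primitive G r (t - real r * \<sigma>)) {0..t}"
      by (simp add: o_def)
  qed simp
  have "Xsol A0 A1 \<sigma> G t = integral {0..t} (\<lambda>s. Zfun A0 A1 \<sigma> (t - \<sigma> - s) ** Gstar \<sigma> G s)"
    using True by (simp add: Xsol_def)
  also have "\<dots> = integral {0..t} (\<lambda>s. \<Sum>r=0..N. ?Q r ** (trunc_power r (t - real r * \<sigma> - s) *\<^sub>R G s))"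
    by (rule integral_cong) (rule integrand)
  also have "\<dots> = partial_solution A0 A1 \<sigma> G N t"
    using sum_integral by (rule integral_unique)
  finally show ?thesis .
next
  case False
  have "((\<lambda>s. Zfun A0 A1 \<sigma> (t - \<sigma> - s) ** Gstar \<sigma> G s) has_integral 0) {t..0}"
    by (rule has_integral_spike_finite[of "{t}" _ _ "\<lambda>s. 0"]) (auto simp: Zfun_def)
  then have "Xsol A0 A1 \<sigma> G t = 0"
    using False by (simp add: Xsol_def integral_unique)
  moreover have "iterated_primitive G r (t - real r * \<sigma>) = 0" for r
  proof -
    have "0 \<le> real r * \<sigma>"
      using \<open>0 < \<sigma>\<close> by simp
    with False show ?thesis
      by (intro iterated_primitive_nonpos) simp
  qed
  ultimately show ?thesis
    by (simp add: partial_solution_def)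
qed

lemma partial_solution_Suc_has_vector_derivative:
  assumes G: "continuous_on {0..} G" and comm: "\<And>s. 0 \<le> s \<Longrightarrow> A1 ** G s = G s ** A1"
    and "0 \<le> t"
  shows "(partial_solution A0 A1 \<sigma> G (Suc N) has_vector_derivative
      A0 ** partial_solution A0 A1 \<sigma> G N (t - \<sigma>) + partial_solution A0 A1 \<sigma> G N (t - \<sigma>) ** A1 + G t)
      (at t within {0..})"
proof -
  let ?F = "iterated_primitive G" and ?Q = "Qmat A0 A1"
  have split_first: "partial_solution A0 A1 \<sigma> G (Suc N) =
      (\<lambda>y. ?F 0 y + (\<Sum>r=0..N. ?Q (Suc r) ** ?F (Suc r) (y - real (Suc r) * \<sigma>)))"
    unfolding partial_solution_def fun_eq_iff sum.atLeast0_atMost_Suc_shift by simp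
  have "((\<lambda>y. ?Q (Suc r) ** ?F (Suc r) (y - real (Suc r) * \<sigma>)) has_vector_derivative
      ?Q (Suc r) ** ?F r (t - real (Suc r) * \<sigma>)) (at t within {0..})" for r
    by (rule has_vector_derivative_at_within[OF bounded_linear.has_vector_derivative[OF
          bounded_bilinear.bounded_linear_right[OF bounded_bilinear_matrix_matrix_mult]]])
      (rule has_vector_derivative_shift[OF iterated_primitive_Suc_has_vector_derivative[OF G]])
  then have "(partial_solution A0 A1 \<sigma> G (Suc N) has_vector_derivative
      G t + (\<Sum>r=0..N. ?Q (Suc r) ** ?F r (t - real (Suc r) * \<sigma>))) (at t within {0..})"
    unfolding split_first using G \<open>0 \<le> t\<close>
    by (intro has_vector_derivative_add has_vector_derivative_sum
        iterated_primitive_0_has_vector_derivative)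
  moreover have "(\<Sum>r=0..N. ?Q (Suc r) ** ?F r (t - real (Suc r) * \<sigma>)) =
      A0 ** partial_solution A0 A1 \<sigma> G N (t - \<sigma>) + partial_solution A0 A1 \<sigma> G N (t - \<sigma>) ** A1"
  proof -
    have step: "?Q (Suc r) ** ?F r y = A0 ** (?Q r ** ?F r y) + (?Q r ** ?F r y) ** A1" for r y
      using iterated_primitive_commute[OF G comm, of r y]
      by (simp add: matrix_add_rdistrib matrix_mul_assoc[symmetric])
    have delay: "t - real (Suc r) * \<sigma> = t - \<sigma> - real r * \<sigma>" for r
      by (simp add: algebra_simps)
    show ?thesis
      unfolding partial_solution_def sum.distrib[symmetric]
        bounded_bilinear.sum_left[OF bounded_bilinear_matrix_matrix_mult]
        bounded_bilinear.sum_right[OF bounded_bilinear_matrix_matrix_mult]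
      by (intro sum.cong refl) (simp only: delay step)
  qed
  ultimately show ?thesis
    by (simp add: add.commute)
qed

lemma Xsol_has_vector_derivative:
  assumes "0 < \<sigma>" and G: "continuous_on {0..} G" and comm: "\<And>s. 0 \<le> s \<Longrightarrow> A1 ** G s = G s ** A1"
    and "0 \<le> t"
  shows "(Xsol A0 A1 \<sigma> G has_vector_derivative
      A0 ** Xsol A0 A1 \<sigma> G (t - \<sigma>) + Xsol A0 A1 \<sigma> G (t - \<sigma>) ** A1 + G t) (at t within {0..})"
proof -
  define N where "N = nat \<lceil>t / \<sigma>\<rceil>"
  have "t / \<sigma> \<le> real N"
    unfolding N_def by (rule real_nat_ceiling_ge)
  then have "t \<le> real N * \<sigma>"
    using \<open>0 < \<sigma>\<close> by (simp add: divide_le_eq)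
  have X_near: "Xsol A0 A1 \<sigma> G y = partial_solution A0 A1 \<sigma> G (Suc N) y"
    if "y \<in> {0..}" and "dist y t < \<sigma>" for y
  proof (rule Xsol_eq_partial_solution[OF \<open>0 < \<sigma>\<close> G])
    show "- \<sigma> \<le> y"
      using that \<open>0 < \<sigma>\<close> by simp
    show "y \<le> real (Suc N) * \<sigma>"
      using that \<open>t \<le> real N * \<sigma>\<close> by (simp add: dist_real_def algebra_simps)
  qed
  have X_delay: "Xsol A0 A1 \<sigma> G (t - \<sigma>) = partial_solution A0 A1 \<sigma> G N (t - \<sigma>)"
    using \<open>0 \<le> t\<close> \<open>t \<le> real N * \<sigma>\<close> \<open>0 < \<sigma>\<close>
    by (intro Xsol_eq_partial_solution[OF \<open>0 < \<sigma>\<close> G]) simp_all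
  show ?thesis
    unfolding X_delay
    by (rule has_vector_derivative_transform_within[OF
          partial_solution_Suc_has_vector_derivative[OF G comm \<open>0 \<le> t\<close>] \<open>0 < \<sigma>\<close>])
      (simp_all add: \<open>0 \<le> t\<close> X_near)
qed

lemma Xsol_initial_eq_0:
  assumes "0 < \<sigma>" and "continuous_on {0..} G" and "t \<in> {-\<sigma>..0}"
  shows "Xsol A0 A1 \<sigma> G t = 0"
proof -
  have "Xsol A0 A1 \<sigma> G t = partial_solution A0 A1 \<sigma> G 0 t"
    using assms by (intro Xsol_eq_partial_solution) simp_all
  then show ?thesis
    using \<open>t \<in> {-\<sigma>..0}\<close> by (simp add: partial_solution_def iterated_primitive_nonpos)
qed

theorem theorem6:
  fixes A0 A1 :: "real^'n^'n" and \<sigma> :: real and G :: "real \<Rightarrow> real^'n^'n"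
  assumes "\<sigma> > 0"
    and "continuous_on {0..} G"
    and "\<And>t. t \<ge> 0 \<Longrightarrow> A1 ** G t = G t ** A1"
  shows "(\<forall>t\<ge>0. (Xsol A0 A1 \<sigma> G has_vector_derivative
              (A0 ** Xsol A0 A1 \<sigma> G (t - \<sigma>) + Xsol A0 A1 \<sigma> G (t - \<sigma>) ** A1 + G t))
              (at t within {0..}))
         \<and> (\<forall>t\<in>{-\<sigma>..0}. Xsol A0 A1 \<sigma> G t = 0)"
  using Xsol_has_vector_derivative[OF assms] Xsol_initial_eq_0[OF assms(1,2)] by blast

end
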